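(* Let $k$ be a field, $\mathsf{E}$ a locally finite $k$-linear category, and $\mathfrak{P}$ a nonzero left $\mathcal{C}_\mathsf{E}$-contramodule. Then the left $\mathsf{E}$-module $\Theta_\mathsf{E}(\mathfrak{P})$ has a proper big $\mathsf{E}$-submodule.
   Context: A small $k$-linear category $\mathsf{E}$ has $k$-vector spaces $\operatorname{Hom}_\mathsf{E}(x,y)$, $k$-bilinear associative composition and identities with $\mathrm{id}_x\ne0$. A left $\mathsf{E}$-module is a $k$-linear functor $\mathsf{E}\to k\text{-Vect}$. Write $x\preceq y$ if there are $n\ge1$ and objects $x=z_0,\dots,z_n=y$ with $\operatorname{Hom}_\mathsf{E}(z_{i-1},z_i)\neq0$ for all $i$. $\mathsf{E}$ is locally finite if all Hom spaces are finite-dimensional and every $\{z:x\preceq z\preceq y\}$ is finite. A left $\mathsf{E}$-module $T$ is contrafinite if for every object $y$ there is a finite set of objects $A$ such that the action map $\operatorname{Hom}_\mathsf{E}(x,y)\otimes_kT(x)\to T(y)$ vanishes for all $x\notin A$; a submodule $Q\subseteq P$ is big if $P/Q$ is contrafinite. $\mathcal{C}_\mathsf{E}=\bigoplus_{x,y}\mathcal{C}^{x,y}$, $\mathcal{C}^{x,y}=\operatorname{Hom}_\mathsf{E}(x,y)^*$; counit zero on $\mathcal{C}^{x,y}$ for $x\ne y$, evaluation at $\mathrm{id}_x$ on $\mathcal{C}^{x,x}$; comultiplication $\mathcal{C}^{x,y}\to\bigoplus_z\mathcal{C}^{x,z}\otimes\mathcal{C}^{z,y}$ dual to composition $g\otimes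 h\mapsto hg$. A left contramodule over a coalgebra $(\mathcal{C},\mu,\epsilon)$ is a space $\mathfrak{P}$ with $\pi:\operatorname{Hom}_k(\mathcal{C},\mathfrak{P})\to\mathfrak{P}$ such that $\pi(c\mapsto\epsilon(c)p)=p$ and, under $\operatorname{Hom}_k(\mathcal{C},\operatorname{Hom}_k(\mathcal{C},\mathfrak{P}))\cong\operatorname{Hom}_k(\mathcal{C}\otimes\mathcal{C},\mathfrak{P})$, $f\mapsto(c'\otimes c''\mapsto f(c'')(c'))$, $\pi(c\mapsto\pi(f(c)))=\pi(f\circ\mu)$. Set $\varphi\cdot p=\pi(c\mapsto\varphi(c)p)$. With $e_x$ evaluation at $\mathrm{id}_x$ on $\mathcal{C}^{x,x}$ (zero elsewhere) and $\mathrm{ev}_f$, for $f\in\operatorname{Hom}_\mathsf{E}(x,y)$, evaluation at $f$ on $\mathcal{C}^{x,y}$ (zero elsewhere): $\Theta_\mathsf{E}(\mathfrak{P})(x)=e_x\cdot\mathfrak{P}$ (with $\mathfrak{P}\cong\prod_xe_x\cdot\mathfrak{P}$), $f$ acting by $p\mapsto\mathrm{ev}_f\cdot p$. *)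

theory Defs
  imports Complex_Main
begin

text \<open>
All Hom spaces live inside one
ambient k-vector space 'm (scalar multiplication sM); Hom x y is a subspace of 'm.
Composition cmp x y z h g is h o g for g in Hom x y, h in Hom y z; idn x is the identity.
\<close>

definition klinear_category ::
  "('k::field \<Rightarrow> 'm::ab_group_add \<Rightarrow> 'm) \<Rightarrow> ('o \<Rightarrow> 'o \<Rightarrow> 'm set)
   \<Rightarrow> ('o \<Rightarrow> 'o \<Rightarrow> 'o \<Rightarrow> 'm \<Rightarrow> 'm \<Rightarrow> 'm) \<Rightarrow> ('o \<Rightarrow> 'm) \<Rightarrow> bool" where
  "klinear_category sM Hom cmp idn \<longleftrightarrow>
     vector_space sM \<and>
     (\<forall>x y. module.subspace sM (Hom x y)) \<and>
     (\<forall>x y z g h. g \<in> Hom x y \<longrightarrow> h \<in> Hom y z \<longrightarrow> cmp x y z h g \<in> Hom x z) \<and>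
     (\<forall>x y z g h h'. g \<in> Hom x y \<longrightarrow> h \<in> Hom y z \<longrightarrow> h' \<in> Hom y z \<longrightarrow>
        cmp x y z (h + h') g = cmp x y z h g + cmp x y z h' g) \<and>
     (\<forall>x y z g g' h. g \<in> Hom x y \<longrightarrow> g' \<in> Hom x y \<longrightarrow> h \<in> Hom y z \<longrightarrow>
        cmp x y z h (g + g') = cmp x y z h g + cmp x y z h g') \<and>
     (\<forall>x y z g h c. g \<in> Hom x y \<longrightarrow> h \<in> Hom y z \<longrightarrow>
        cmp x y z (sM c h) g = sM c (cmp x y z h g) \<and>
        cmp x y z h (sM c g) = sM c (cmp x y z h g)) \<and>
     (\<forall>x y z w g h l. g \<in> Hom x y \<longrightarrow> h \<in> Hom y z \<longrightarrow> l \<in> Hom z w \<longrightarrow>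
        cmp x z w l (cmp x y z h g) = cmp x y w (cmp y z w l h) g) \<and>
     (\<forall>x. idn x \<in> Hom x x \<and> idn x \<noteq> 0) \<and>
     (\<forall>x y g. g \<in> Hom x y \<longrightarrow> cmp x x y g (idn x) = g \<and> cmp x y y (idn y) g = g)"

definition prec :: "('o \<Rightarrow> 'o \<Rightarrow> 'm::zero set) \<Rightarrow> 'o \<Rightarrow> 'o \<Rightarrow> bool" where
  "prec Hom x y \<longleftrightarrow> (x, y) \<in> {(a, b). Hom a b \<noteq> {0}}\<^sup>+"

definition locally_finite ::
  "('k::field \<Rightarrow> 'm::ab_group_add \<Rightarrow> 'm) \<Rightarrow> ('o \<Rightarrow> 'o \<Rightarrow> 'm set) \<Rightarrow> bool" where
  "locally_finite sM Hom \<longleftrightarrow>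
     (\<forall>x y. \<exists>B. finite B \<and> B \<subseteq> Hom x y \<and> module.span sM B = Hom x y) \<and>
     (\<forall>x y. finite {z. prec Hom x z \<and> prec Hom z y})"

text \<open>C^{x,y} = Hom(x,y)^*: linear functionals on Hom x y (extensional: zero off Hom x y).\<close>
definition dualsp ::
  "('k::field \<Rightarrow> 'm::ab_group_add \<Rightarrow> 'm) \<Rightarrow> ('o \<Rightarrow> 'o \<Rightarrow> 'm set) \<Rightarrow> 'o \<Rightarrow> 'o \<Rightarrow> ('m \<Rightarrow> 'k) set" where
  "dualsp sM Hom x y = {\<phi>.
     (\<forall>g\<in>Hom x y. \<forall>h\<in>Hom x y. \<phi> (g + h) = \<phi> g + \<phi> h) \<and>
     (\<forall>c. \<forall>g\<in>Hom x y. \<phi> (sM c g) = c * \<phi> g) \<and>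
     (\<forall>g. g \<notin> Hom x y \<longrightarrow> \<phi> g = 0)}"

text \<open>Hom_k(C_E, P): since C_E = \<Oplus>_{x,y} C^{x,y}, a linear map C_E \<rightarrow> P is a family of
linear maps C^{x,y} \<rightarrow> P (extensional: zero off C^{x,y}).\<close>
definition homCP ::
  "('k::field \<Rightarrow> 'm::ab_group_add \<Rightarrow> 'm) \<Rightarrow> ('o \<Rightarrow> 'o \<Rightarrow> 'm set) \<Rightarrow> ('k \<Rightarrow> 'p::ab_group_add \<Rightarrow> 'p)
   \<Rightarrow> ('o \<Rightarrow> 'o \<Rightarrow> ('m \<Rightarrow> 'k) \<Rightarrow> 'p) set" where
  "homCP sM Hom sP = {F. \<forall>x y.
     (\<forall>\<phi>\<in>dualsp sM Hom x y. \<forall>\<psi>\<in>dualsp sM Hom x y. F x y (\<lambda>g. \<phi> g + \<psi> g) = F x y \<phi> + F x y \<psi>) \<and>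
     (\<forall>c. \<forall>\<phi>\<in>dualsp sM Hom x y. F x y (\<lambda>g. c * \<phi> g) = sP c (F x y \<phi>)) \<and>
     (\<forall>\<phi>. \<phi> \<notin> dualsp sM Hom x y \<longrightarrow> F x y \<phi> = 0)}"

text \<open>Hom_k(C_E, Hom_k(C_E, P)), as families of linear maps C^{x,y} \<rightarrow> Hom_k(C_E,P).\<close>
definition homCHomCP ::
  "('k::field \<Rightarrow> 'm::ab_group_add \<Rightarrow> 'm) \<Rightarrow> ('o \<Rightarrow> 'o \<Rightarrow> 'm set) \<Rightarrow> ('k \<Rightarrow> 'p::ab_group_add \<Rightarrow> 'p)
   \<Rightarrow> ('o \<Rightarrow> 'o \<Rightarrow> ('m \<Rightarrow> 'k) \<Rightarrow> ('o \<Rightarrow> 'o \<Rightarrow> ('m \<Rightarrow> 'k) \<Rightarrow> 'p)) set" where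
  "homCHomCP sM Hom sP = {f. \<forall>x y.
     (\<forall>\<phi>. f x y \<phi> \<in> homCP sM Hom sP) \<and>
     (\<forall>\<phi>\<in>dualsp sM Hom x y. \<forall>\<psi>\<in>dualsp sM Hom x y.
        f x y (\<lambda>g. \<phi> g + \<psi> g) = (\<lambda>a b \<chi>. f x y \<phi> a b \<chi> + f x y \<psi> a b \<chi>)) \<and>
     (\<forall>c. \<forall>\<phi>\<in>dualsp sM Hom x y. f x y (\<lambda>g. c * \<phi> g) = (\<lambda>a b \<chi>. sP c (f x y \<phi> a b \<chi>))) \<and>
     (\<forall>\<phi>. \<phi> \<notin> dualsp sM Hom x y \<longrightarrow> f x y \<phi> = (\<lambda>a b \<chi>. 0))}"

text \<open>R = [(z_k, \<phi>'_k, \<phi>''_k)] represents the comultiplication of \<phi> \<in> C^{x,y}: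
  \<mu>(\<phi>) = \<Sum>_k \<phi>'_k \<otimes> \<phi>''_k in \<Oplus>_z C^{x,z} \<otimes> C^{z,y}, i.e. it is dual to composition
  g \<otimes> h \<mapsto> h g (an element of C^{x,z} \<otimes> C^{z,y} is determined by its pairings with g \<otimes> h).\<close>
definition comult_rep ::
  "('k::field \<Rightarrow> 'm::ab_group_add \<Rightarrow> 'm) \<Rightarrow> ('o \<Rightarrow> 'o \<Rightarrow> 'm set) \<Rightarrow> ('o \<Rightarrow> 'o \<Rightarrow> 'o \<Rightarrow> 'm \<Rightarrow> 'm \<Rightarrow> 'm)
   \<Rightarrow> 'o \<Rightarrow> 'o \<Rightarrow> ('m \<Rightarrow> 'k) \<Rightarrow> ('o \<times> ('m \<Rightarrow> 'k) \<times> ('m \<Rightarrow> 'k)) list \<Rightarrow> bool" where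
  "comult_rep sM Hom cmp x y \<phi> R \<longleftrightarrow>
     (\<forall>(z, \<phi>1, \<phi>2) \<in> set R. \<phi>1 \<in> dualsp sM Hom x z \<and> \<phi>2 \<in> dualsp sM Hom z y) \<and>
     (\<forall>z g h. g \<in> Hom x z \<longrightarrow> h \<in> Hom z y \<longrightarrow>
        \<phi> (cmp x z y h g) = (\<Sum>(z', \<phi>1, \<phi>2) \<leftarrow> R. if z' = z then \<phi>1 g * \<phi>2 h else 0))"

definition contramodule ::
  "('k::field \<Rightarrow> 'm::ab_group_add \<Rightarrow> 'm) \<Rightarrow> ('o \<Rightarrow> 'o \<Rightarrow> 'm set) \<Rightarrow> ('o \<Rightarrow> 'o \<Rightarrow> 'o \<Rightarrow> 'm \<Rightarrow> 'm \<Rightarrow> 'm)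
   \<Rightarrow> ('o \<Rightarrow> 'm) \<Rightarrow> ('k \<Rightarrow> 'p::ab_group_add \<Rightarrow> 'p) \<Rightarrow> (('o \<Rightarrow> 'o \<Rightarrow> ('m \<Rightarrow> 'k) \<Rightarrow> 'p) \<Rightarrow> 'p) \<Rightarrow> bool" where
  "contramodule sM Hom cmp idn sP \<pi> \<longleftrightarrow>
     vector_space sP \<and>
     (\<forall>F\<in>homCP sM Hom sP. \<forall>G\<in>homCP sM Hom sP. \<pi> (\<lambda>x y \<phi>. F x y \<phi> + G x y \<phi>) = \<pi> F + \<pi> G) \<and>
     (\<forall>c. \<forall>F\<in>homCP sM Hom sP. \<pi> (\<lambda>x y \<phi>. sP c (F x y \<phi>)) = sP c (\<pi> F)) \<and>
     \<comment> \<open>counit axiom: \<pi>(c \<mapsto> \<epsilon>(c) p) = p\<close>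
     (\<forall>p. \<pi> (\<lambda>x y \<phi>. if \<phi> \<in> dualsp sM Hom x y \<and> x = y then sP (\<phi> (idn x)) p else 0) = p) \<and>
     \<comment> \<open>contraassociativity: \<pi>(c \<mapsto> \<pi>(f(c))) = \<pi>(f \<circ> \<mu>), where f is viewed as the map
        c' \<otimes> c'' \<mapsto> f(c'')(c') on C \<otimes> C and G below is f \<circ> \<mu>\<close>
     (\<forall>f\<in>homCHomCP sM Hom sP. \<forall>G.
        (\<forall>x y \<phi>. \<phi> \<in> dualsp sM Hom x y \<longrightarrow> (\<forall>R. comult_rep sM Hom cmp x y \<phi> R \<longrightarrow>
            G x y \<phi> = (\<Sum>(z, \<phi>1, \<phi>2) \<leftarrow> R. f z y \<phi>2 x z \<phi>1))) \<and>
        (\<forall>x y \<phi>. \<phi> \<notin> dualsp sM Hom x y \<longrightarrow> G x y \<phi> = 0)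
        \<longrightarrow> \<pi> (\<lambda>x y \<phi>. \<pi> (f x y \<phi>)) = \<pi> G)"

text \<open>\<Phi> \<cdot> p = \<pi>(c \<mapsto> \<Phi>(c) p) for \<Phi> \<in> C_E^*, given by its restrictions to the C^{x,y}.\<close>
definition cact ::
  "('k::field \<Rightarrow> 'm::ab_group_add \<Rightarrow> 'm) \<Rightarrow> ('o \<Rightarrow> 'o \<Rightarrow> 'm set) \<Rightarrow> ('k \<Rightarrow> 'p::ab_group_add \<Rightarrow> 'p)
   \<Rightarrow> (('o \<Rightarrow> 'o \<Rightarrow> ('m \<Rightarrow> 'k) \<Rightarrow> 'p) \<Rightarrow> 'p) \<Rightarrow> ('o \<Rightarrow> 'o \<Rightarrow> ('m \<Rightarrow> 'k) \<Rightarrow> 'k) \<Rightarrow> 'p \<Rightarrow> 'p" where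
  "cact sM Hom sP \<pi> \<Phi> p = \<pi> (\<lambda>x y \<phi>. if \<phi> \<in> dualsp sM Hom x y then sP (\<Phi> x y \<phi>) p else 0)"

definition unit_el :: "('o \<Rightarrow> 'm) \<Rightarrow> 'o \<Rightarrow> ('o \<Rightarrow> 'o \<Rightarrow> ('m \<Rightarrow> 'k) \<Rightarrow> 'k::zero)" where
  "unit_el idn x = (\<lambda>a b \<phi>. if a = x \<and> b = x then \<phi> (idn x) else 0)"

definition ev_el :: "'o \<Rightarrow> 'o \<Rightarrow> 'm \<Rightarrow> ('o \<Rightarrow> 'o \<Rightarrow> ('m \<Rightarrow> 'k) \<Rightarrow> 'k::zero)" where
  "ev_el x y f = (\<lambda>a b \<phi>. if a = x \<and> b = y then \<phi> f else 0)"

text \<open>\<Theta>_E(P): underlying spaces \<Theta>(x) = e_x \<cdot> P and action of f \<in> Hom(x,y) by p \<mapsto> ev_f \<cdot> p.\<close>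
definition Theta_sp ::
  "('k::field \<Rightarrow> 'm::ab_group_add \<Rightarrow> 'm) \<Rightarrow> ('o \<Rightarrow> 'o \<Rightarrow> 'm set) \<Rightarrow> ('o \<Rightarrow> 'm) \<Rightarrow> ('k \<Rightarrow> 'p::ab_group_add \<Rightarrow> 'p)
   \<Rightarrow> (('o \<Rightarrow> 'o \<Rightarrow> ('m \<Rightarrow> 'k) \<Rightarrow> 'p) \<Rightarrow> 'p) \<Rightarrow> 'o \<Rightarrow> 'p set" where
  "Theta_sp sM Hom idn sP \<pi> x = range (cact sM Hom sP \<pi> (unit_el idn x))"

definition Theta_act ::
  "('k::field \<Rightarrow> 'm::ab_group_add \<Rightarrow> 'm) \<Rightarrow> ('o \<Rightarrow> 'o \<Rightarrow> 'm set) \<Rightarrow> ('k \<Rightarrow> 'p::ab_group_add \<Rightarrow> 'p)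
   \<Rightarrow> (('o \<Rightarrow> 'o \<Rightarrow> ('m \<Rightarrow> 'k) \<Rightarrow> 'p) \<Rightarrow> 'p) \<Rightarrow> 'o \<Rightarrow> 'o \<Rightarrow> 'm \<Rightarrow> 'p \<Rightarrow> 'p" where
  "Theta_act sM Hom sP \<pi> x y f = cact sM Hom sP \<pi> (ev_el x y f)"

text \<open>Submodules of a left E-module (T, \<rho>) with T x \<subseteq> 'p and \<rho> x y f : T x \<rightarrow> T y.\<close>
definition submodule ::
  "('o \<Rightarrow> 'o \<Rightarrow> 'm set) \<Rightarrow> ('k::field \<Rightarrow> 'p::ab_group_add \<Rightarrow> 'p) \<Rightarrow> ('o \<Rightarrow> 'p set)
   \<Rightarrow> ('o \<Rightarrow> 'o \<Rightarrow> 'm \<Rightarrow> 'p \<Rightarrow> 'p) \<Rightarrow> ('o \<Rightarrow> 'p set) \<Rightarrow> bool" where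
  "submodule Hom sP T \<rho> Q \<longleftrightarrow>
     (\<forall>x. Q x \<subseteq> T x \<and> module.subspace sP (Q x)) \<and>
     (\<forall>x y f p. f \<in> Hom x y \<longrightarrow> p \<in> Q x \<longrightarrow> \<rho> x y f p \<in> Q y)"

text \<open>Q is big iff T/Q is contrafinite: for each y there is a finite A such that for x \<notin> A
the action map Hom(x,y) \<otimes> (T/Q)(x) \<rightarrow> (T/Q)(y) vanishes, i.e. \<rho> x y f p \<in> Q y.\<close>
definition big_submodule ::
  "('o \<Rightarrow> 'o \<Rightarrow> 'm set) \<Rightarrow> ('k::field \<Rightarrow> 'p::ab_group_add \<Rightarrow> 'p) \<Rightarrow> ('o \<Rightarrow> 'p set)
   \<Rightarrow> ('o \<Rightarrow> 'o \<Rightarrow> 'm \<Rightarrow> 'p \<Rightarrow> 'p) \<Rightarrow> ('o \<Rightarrow> 'p set) \<Rightarrow> bool" where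
  "big_submodule Hom sP T \<rho> Q \<longleftrightarrow>
     submodule Hom sP T \<rho> Q \<and>
     (\<forall>y. \<exists>A. finite A \<and> (\<forall>x. x \<notin> A \<longrightarrow> (\<forall>f\<in>Hom x y. \<forall>p\<in>T x. \<rho> x y f p \<in> Q y)))"

end

theory Submission
  imports Defs
begin

(*
  Let rad be the image under \<pi> of the maps C \<rightarrow> P vanishing on every component C^{a,b} with
  a = b or b \<preceq> a.  Contraassociativity shows that rad is stable under every ev_f, and the
  counit axiom that p \<in> rad as soon as all e_x \<cdot> p are; so Q(x) = \<Theta>(x) \<inter> rad is a submodule,
  proper unless rad = P.  It is big: for x outside the finite set {y} \<union> {x. y \<preceq> x \<preceq> y}, a nonzero
  f : x \<rightarrow> y gives x \<preceq> y but not y \<preceq> x, so ev_f \<cdot> p is \<pi> of a map supported on C^{x,y}.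

  It remains to show that rad = P forces P = 0 (Nakayama).  Then every F : C \<rightarrow> P lifts along \<pi>
  to a map C \<rightarrow> Hom(C, P) with values in the radical maps, and contraassociativity turns F into
  a map F' with \<pi> F' = \<pi> F that vanishes on C^{x,y} whenever the interval [x, y) of \<preceq> has at most
  n elements, provided F does so for fewer than n.  Starting from a preimage F_0 of p, the sum
  of the iterates F_n is locally finite, and contraassociativity gives
  \<pi>(\<Sigma> F_n) = \<pi>(\<Sigma> F_(n+1)), that is p = \<pi> F_0 = 0.
*)

text \<open>Index-wise access to a list \<open>R\<close> representing \<open>\<mu>(\<phi>)\<close> (see \<open>comult_rep\<close>), so that sums over
  \<open>R\<close> become finite sums that can be regrouped by the middle object.\<close>

definition rep_obj :: "('o \<times> 'a \<times> 'b) list \<Rightarrow> nat \<Rightarrow> 'o" where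
  "rep_obj R j = fst (R ! j)"

definition rep_fst :: "('o \<times> 'a \<times> 'b) list \<Rightarrow> nat \<Rightarrow> 'a" where
  "rep_fst R j = fst (snd (R ! j))"

definition rep_snd :: "('o \<times> 'a \<times> 'b) list \<Rightarrow> nat \<Rightarrow> 'b" where
  "rep_snd R j = snd (snd (R ! j))"

definition rep_fiber :: "('o \<times> 'a \<times> 'b) list \<Rightarrow> 'o \<Rightarrow> nat set" where
  "rep_fiber R z = {j \<in> {..<length R}. rep_obj R j = z}"

lemma sum_list_triples:
  "(\<Sum>(z, a, b) \<leftarrow> R. k z a b) = (\<Sum>j<length R. k (rep_obj R j) (rep_fst R j) (rep_snd R j))"
  by (simp add: sum_list_sum_nth atLeast0LessThan rep_obj_def rep_fst_def rep_snd_def split_beta)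

lemma sum_rep_fiber: "(\<Sum>j<length R. if rep_obj R j = z then k j else 0) = (\<Sum>j\<in>rep_fiber R z. k j)"
  unfolding rep_fiber_def by (rule sum.inter_filter[symmetric]) simp

locale category_contramodule =
  fixes sM :: "'k::field \<Rightarrow> 'm::ab_group_add \<Rightarrow> 'm"
    and Hom :: "'o \<Rightarrow> 'o \<Rightarrow> 'm set"
    and cmp :: "'o \<Rightarrow> 'o \<Rightarrow> 'o \<Rightarrow> 'm \<Rightarrow> 'm \<Rightarrow> 'm"
    and idn :: "'o \<Rightarrow> 'm"
    and sP :: "'k \<Rightarrow> 'p::ab_group_add \<Rightarrow> 'p"
    and \<pi> :: "('o \<Rightarrow> 'o \<Rightarrow> ('m \<Rightarrow> 'k) \<Rightarrow> 'p) \<Rightarrow> 'p"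
  assumes category: "klinear_category sM Hom cmp idn"
    and contramodule: "contramodule sM Hom cmp idn sP \<pi>"

sublocale category_contramodule \<subseteq> M: vector_space sM
  using category unfolding klinear_category_def by auto

sublocale category_contramodule \<subseteq> P: vector_space sP
  using contramodule unfolding contramodule_def by auto

context category_contramodule
begin

abbreviation C where "C \<equiv> dualsp sM Hom"
abbreviation HomC where "HomC \<equiv> homCP sM Hom sP"
abbreviation HomCHomC where "HomCHomC \<equiv> homCHomCP sM Hom sP"
abbreviation act where "act \<equiv> cact sM Hom sP \<pi>"
abbreviation Theta where "Theta \<equiv> Theta_sp sM Hom idn sP \<pi>"
abbreviation rho where "rho \<equiv> Theta_act sM Hom sP \<pi>"

lemma Hom_subspace: "M.subspace (Hom x y)"
  using category unfolding klinear_category_def by auto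

lemma zero_in_Hom [simp]: "0 \<in> Hom x y"
  using Hom_subspace M.subspace_0 by blast

lemma Hom_add: "g \<in> Hom x y \<Longrightarrow> h \<in> Hom x y \<Longrightarrow> g + h \<in> Hom x y"
  using Hom_subspace M.subspace_add by blast

lemma Hom_scale: "g \<in> Hom x y \<Longrightarrow> sM c g \<in> Hom x y"
  using Hom_subspace M.subspace_scale by blast

lemma Hom_sum: "(\<And>i. i \<in> I \<Longrightarrow> v i \<in> Hom x y) \<Longrightarrow> sum v I \<in> Hom x y"
  using Hom_subspace M.subspace_sum by blast

lemma cmp_in_Hom: "g \<in> Hom x y \<Longrightarrow> h \<in> Hom y z \<Longrightarrow> cmp x y z h g \<in> Hom x z"
  using category unfolding klinear_category_def by simp

lemma cmp_add_left: "g \<in> Hom x y \<Longrightarrow> h \<in> Hom y z \<Longrightarrow> h' \<in> Hom y z \<Longrightarrow>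
    cmp x y z (h + h') g = cmp x y z h g + cmp x y z h' g"
  using category unfolding klinear_category_def by simp

lemma cmp_add_right: "g \<in> Hom x y \<Longrightarrow> g' \<in> Hom x y \<Longrightarrow> h \<in> Hom y z \<Longrightarrow>
    cmp x y z h (g + g') = cmp x y z h g + cmp x y z h g'"
  using category unfolding klinear_category_def by simp

lemma cmp_scale_left: "g \<in> Hom x y \<Longrightarrow> h \<in> Hom y z \<Longrightarrow> cmp x y z (sM c h) g = sM c (cmp x y z h g)"
  using category unfolding klinear_category_def by simp

lemma cmp_scale_right: "g \<in> Hom x y \<Longrightarrow> h \<in> Hom y z \<Longrightarrow> cmp x y z h (sM c g) = sM c (cmp x y z h g)"
  using category unfolding klinear_category_def by simp

lemma idn_in_Hom: "idn x \<in> Hom x x"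
  using category unfolding klinear_category_def by simp

lemma cmp_idn_left: "g \<in> Hom x y \<Longrightarrow> cmp x y y (idn y) g = g"
  using category unfolding klinear_category_def by simp

lemma cmp_zero_left: "g \<in> Hom x y \<Longrightarrow> cmp x y z 0 g = 0"
  using cmp_add_left[of g x y 0 z 0] by simp

lemma prec_trans: "prec Hom x y \<Longrightarrow> prec Hom y z \<Longrightarrow> prec Hom x z"
  unfolding prec_def by (meson trancl_trans)

lemma prec_if_Hom_nontrivial: "Hom x y \<noteq> {0} \<Longrightarrow> prec Hom x y"
  unfolding prec_def by (rule r_into_trancl) auto

lemma prec_if_nonzero_Hom: "g \<in> Hom x y \<Longrightarrow> g \<noteq> 0 \<Longrightarrow> prec Hom x y"
  using prec_if_Hom_nontrivial by blast

lemma C_add: "\<phi> \<in> C x y \<Longrightarrow> g \<in> Hom x y \<Longrightarrow> h \<in> Hom x y \<Longrightarrow> \<phi> (g + h) = \<phi> g + \<phi> h"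
  unfolding dualsp_def by blast

lemma C_scale: "\<phi> \<in> C x y \<Longrightarrow> g \<in> Hom x y \<Longrightarrow> \<phi> (sM c g) = c * \<phi> g"
  unfolding dualsp_def by blast

lemma C_outside: "\<phi> \<in> C x y \<Longrightarrow> g \<notin> Hom x y \<Longrightarrow> \<phi> g = 0"
  unfolding dualsp_def by blast

lemma C_at_zero: "\<phi> \<in> C x y \<Longrightarrow> \<phi> 0 = 0"
  using C_scale[of \<phi> x y 0 0] by simp

lemma C_sum_arg: "\<phi> \<in> C x y \<Longrightarrow> (\<And>i. i \<in> I \<Longrightarrow> v i \<in> Hom x y) \<Longrightarrow> \<phi> (sum v I) = (\<Sum>i\<in>I. \<phi> (v i))"
  by (induction I rule: infinite_finite_induct) (simp_all add: C_at_zero C_add Hom_sum)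

lemma zero_in_C [simp]: "(\<lambda>g. 0) \<in> C x y"
  unfolding dualsp_def by auto

lemma C_plus: "\<phi> \<in> C x y \<Longrightarrow> \<psi> \<in> C x y \<Longrightarrow> (\<lambda>g. \<phi> g + \<psi> g) \<in> C x y"
  unfolding dualsp_def by (auto simp: algebra_simps)

lemma C_smult: "\<phi> \<in> C x y \<Longrightarrow> (\<lambda>g. c * \<phi> g) \<in> C x y"
  unfolding dualsp_def by (auto simp: algebra_simps)

lemma C_sum: "(\<And>i. i \<in> I \<Longrightarrow> c i \<in> C x y) \<Longrightarrow> (\<lambda>g. \<Sum>i\<in>I. c i g) \<in> C x y"
  by (induction I rule: infinite_finite_induct) (auto intro: C_plus)

lemma HomC_add: "F \<in> HomC \<Longrightarrow> \<phi> \<in> C x y \<Longrightarrow> \<psi> \<in> C x y \<Longrightarrow>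
    F x y (\<lambda>g. \<phi> g + \<psi> g) = F x y \<phi> + F x y \<psi>"
  unfolding homCP_def by blast

lemma HomC_scale: "F \<in> HomC \<Longrightarrow> \<phi> \<in> C x y \<Longrightarrow> F x y (\<lambda>g. c * \<phi> g) = sP c (F x y \<phi>)"
  unfolding homCP_def by blast

lemma HomC_outside: "F \<in> HomC \<Longrightarrow> \<phi> \<notin> C x y \<Longrightarrow> F x y \<phi> = 0"
  unfolding homCP_def by blast

lemma HomC_at_zero: "F \<in> HomC \<Longrightarrow> F x y (\<lambda>g. 0) = 0"
  using HomC_scale[of F "\<lambda>g. 0" x y 0] by simp

lemma HomC_sum_arg: "F \<in> HomC \<Longrightarrow> (\<And>i. i \<in> I \<Longrightarrow> c i \<in> C x y) \<Longrightarrow>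
    F x y (\<lambda>g. \<Sum>i\<in>I. c i g) = (\<Sum>i\<in>I. F x y (c i))"
proof (induction I rule: infinite_finite_induct)
  case (insert i I)
  then show ?case using HomC_add[of F "c i" x y "\<lambda>g. \<Sum>i\<in>I. c i g"] C_sum[of I c x y] by auto
qed (auto simp: HomC_at_zero)

lemma zero_in_HomC [simp]: "(\<lambda>x y \<phi>. 0) \<in> HomC"
  unfolding homCP_def by auto

lemma HomC_plus: "F \<in> HomC \<Longrightarrow> G \<in> HomC \<Longrightarrow> (\<lambda>x y \<phi>. F x y \<phi> + G x y \<phi>) \<in> HomC"
  unfolding homCP_def by (auto simp: algebra_simps P.scale_right_distrib)

lemma HomC_smult: "F \<in> HomC \<Longrightarrow> (\<lambda>x y \<phi>. sP (c x y) (F x y \<phi>)) \<in> HomC"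
  unfolding homCP_def by (auto simp: algebra_simps P.scale_right_distrib mult.commute)

lemma HomC_sum: "finite J \<Longrightarrow> (\<And>n. n \<in> J \<Longrightarrow> F n \<in> HomC) \<Longrightarrow> (\<lambda>x y \<phi>. \<Sum>n\<in>J. F n x y \<phi>) \<in> HomC"
  by (induction J rule: finite_induct) (auto intro: HomC_plus)

lemma HomC_sum_local:
  assumes "\<And>n. F n \<in> HomC"
  shows "(\<lambda>x y \<phi>. \<Sum>n\<in>J x y. F n x y \<phi>) \<in> HomC"
  using assms unfolding homCP_def
  by (auto simp: sum.distrib P.scale_sum_right)

lemma HomC_diagonal:
  assumes "\<And>z. H z \<in> HomC"
  shows "(\<lambda>x y \<phi>. H y x y \<phi>) \<in> HomC"
  using assms unfolding homCP_def by auto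

lemma HomCHomC_HomC: "f \<in> HomCHomC \<Longrightarrow> f x y \<phi> \<in> HomC"
  unfolding homCHomCP_def by simp

lemma HomCHomC_add: "f \<in> HomCHomC \<Longrightarrow> \<phi> \<in> C x y \<Longrightarrow> \<psi> \<in> C x y \<Longrightarrow>
    f x y (\<lambda>g. \<phi> g + \<psi> g) = (\<lambda>a b \<chi>. f x y \<phi> a b \<chi> + f x y \<psi> a b \<chi>)"
  unfolding homCHomCP_def by simp

lemma HomCHomC_scale: "f \<in> HomCHomC \<Longrightarrow> \<phi> \<in> C x y \<Longrightarrow>
    f x y (\<lambda>g. c * \<phi> g) = (\<lambda>a b \<chi>. sP c (f x y \<phi> a b \<chi>))"
  unfolding homCHomCP_def by simp

lemma HomCHomC_at_zero: "f \<in> HomCHomC \<Longrightarrow> f x y (\<lambda>g. 0) = (\<lambda>a b \<chi>. 0)"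
  using HomCHomC_scale[of f "\<lambda>g. 0" x y 0] by simp

lemma HomCHomC_sum_arg: "f \<in> HomCHomC \<Longrightarrow> (\<And>i. i \<in> I \<Longrightarrow> c i \<in> C x y) \<Longrightarrow>
    f x y (\<lambda>g. \<Sum>i\<in>I. c i g) = (\<lambda>a b \<chi>. \<Sum>i\<in>I. f x y (c i) a b \<chi>)"
proof (induction I rule: infinite_finite_induct)
  case (insert i I)
  then show ?case using HomCHomC_add[of f "c i" x y "\<lambda>g. \<Sum>i\<in>I. c i g"] C_sum[of I c x y] by auto
qed (auto simp: HomCHomC_at_zero)

lemma pi_add: "F \<in> HomC \<Longrightarrow> G \<in> HomC \<Longrightarrow> \<pi> (\<lambda>x y \<phi>. F x y \<phi> + G x y \<phi>) = \<pi> F + \<pi> G"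
  using contramodule unfolding contramodule_def by simp

lemma pi_scale: "F \<in> HomC \<Longrightarrow> \<pi> (\<lambda>x y \<phi>. sP c (F x y \<phi>)) = sP c (\<pi> F)"
  using contramodule unfolding contramodule_def by simp

lemma pi_counit: "\<pi> (\<lambda>x y \<phi>. if \<phi> \<in> C x y \<and> x = y then sP (\<phi> (idn x)) p else 0) = p"
  using contramodule unfolding contramodule_def by simp

lemma pi_zero: "\<pi> (\<lambda>x y \<phi>. 0) = 0"
  using pi_scale[of "\<lambda>x y \<phi>. 0" 0] by simp

lemma pi_sum: "finite J \<Longrightarrow> (\<And>n. n \<in> J \<Longrightarrow> F n \<in> HomC) \<Longrightarrow>
    \<pi> (\<lambda>x y \<phi>. \<Sum>n\<in>J. F n x y \<phi>) = (\<Sum>n\<in>J. \<pi> (F n))"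
proof (induction J rule: finite_induct)
  case (insert n J)
  then show ?case using pi_add[of "F n" "\<lambda>x y \<phi>. \<Sum>n\<in>J. F n x y \<phi>"] HomC_sum[of J F] by auto
qed (simp add: pi_zero)

lemma comult_rep_C:
  "comult_rep sM Hom cmp x y \<phi> R \<Longrightarrow> j < length R \<Longrightarrow>
    rep_fst R j \<in> C x (rep_obj R j) \<and> rep_snd R j \<in> C (rep_obj R j) y"
  unfolding comult_rep_def rep_obj_def rep_fst_def rep_snd_def
  by (metis (no_types, lifting) case_prodD nth_mem prod.collapse)

lemma comult_rep_cmp:
  assumes "comult_rep sM Hom cmp x y \<phi> R" and "g \<in> Hom x z" and "h \<in> Hom z y"
  shows "\<phi> (cmp x z y h g) = (\<Sum>j\<in>rep_fiber R z. rep_fst R j g * rep_snd R j h)"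
  using assms unfolding comult_rep_def by (simp add: sum_list_triples sum_rep_fiber)

lemma pi_contraassoc:
  assumes "f \<in> HomCHomC"
    and "\<And>x y \<phi> R. \<phi> \<in> C x y \<Longrightarrow> comult_rep sM Hom cmp x y \<phi> R \<Longrightarrow>
      G x y \<phi> = (\<Sum>j<length R. f (rep_obj R j) y (rep_snd R j) x (rep_obj R j) (rep_fst R j))"
    and "\<And>x y \<phi>. \<phi> \<notin> C x y \<Longrightarrow> G x y \<phi> = 0"
  shows "\<pi> (\<lambda>x y \<phi>. \<pi> (f x y \<phi>)) = \<pi> G"
  using contramodule assms unfolding contramodule_def by (simp add: sum_list_triples)

subsection \<open>Actions of functionals on the coalgebra\<close>

definition C_linear :: "('o \<Rightarrow> 'o \<Rightarrow> ('m \<Rightarrow> 'k) \<Rightarrow> 'k) \<Rightarrow> bool" where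
  "C_linear \<Phi> \<longleftrightarrow> (\<forall>x y. (\<forall>\<phi>\<in>C x y. \<forall>\<psi>\<in>C x y. \<Phi> x y (\<lambda>g. \<phi> g + \<psi> g) = \<Phi> x y \<phi> + \<Phi> x y \<psi>) \<and>
     (\<forall>c. \<forall>\<phi>\<in>C x y. \<Phi> x y (\<lambda>g. c * \<phi> g) = c * \<Phi> x y \<phi>))"

definition counit_el :: "'o \<Rightarrow> 'o \<Rightarrow> ('m \<Rightarrow> 'k) \<Rightarrow> 'k" where
  "counit_el = (\<lambda>a b \<phi>. if a = b then \<phi> (idn a) else 0)"

lemma unit_el_eq_ev_el: "unit_el idn x = ev_el x x (idn x)"
  unfolding unit_el_def ev_el_def by simp

lemma C_linear_ev_el: "C_linear (ev_el x y f)"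
  unfolding C_linear_def ev_el_def by auto

lemma C_linear_counit_el: "C_linear counit_el"
  unfolding C_linear_def counit_el_def by auto

definition act_map :: "('o \<Rightarrow> 'o \<Rightarrow> ('m \<Rightarrow> 'k) \<Rightarrow> 'k) \<Rightarrow> 'p \<Rightarrow> 'o \<Rightarrow> 'o \<Rightarrow> ('m \<Rightarrow> 'k) \<Rightarrow> 'p" where
  "act_map \<Phi> p = (\<lambda>x y \<phi>. if \<phi> \<in> C x y then sP (\<Phi> x y \<phi>) p else 0)"

lemma act_eq_pi_act_map: "act \<Phi> p = \<pi> (act_map \<Phi> p)"
  unfolding cact_def act_map_def by simp

lemma act_map_HomC: "C_linear \<Phi> \<Longrightarrow> act_map \<Phi> p \<in> HomC"
  unfolding homCP_def act_map_def C_linear_def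
  by (auto simp: C_plus C_smult P.scale_left_distrib)

lemma act_add: "C_linear \<Phi> \<Longrightarrow> act \<Phi> (p + q) = act \<Phi> p + act \<Phi> q"
proof -
  assume lin: "C_linear \<Phi>"
  have "act_map \<Phi> (p + q) = (\<lambda>x y \<phi>. act_map \<Phi> p x y \<phi> + act_map \<Phi> q x y \<phi>)"
    unfolding act_map_def by (intro ext) (auto simp: P.scale_right_distrib)
  then show ?thesis
    unfolding act_eq_pi_act_map using pi_add[OF act_map_HomC[OF lin] act_map_HomC[OF lin]] by simp
qed

lemma act_scale: "C_linear \<Phi> \<Longrightarrow> act \<Phi> (sP c p) = sP c (act \<Phi> p)"
proof -
  assume lin: "C_linear \<Phi>"
  have "act_map \<Phi> (sP c p) = (\<lambda>x y \<phi>. sP c (act_map \<Phi> p x y \<phi>))"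
    unfolding act_map_def by (intro ext) (auto simp: P.scale_left_commute)
  then show ?thesis unfolding act_eq_pi_act_map using pi_scale[OF act_map_HomC[OF lin]] by simp
qed

lemma act_zero: "C_linear \<Phi> \<Longrightarrow> act \<Phi> 0 = 0"
  using act_scale[of \<Phi> 0 0] by simp

text \<open>An element of \<open>Hom(C, Hom(C, P))\<close> through which \<open>\<Phi> \<cdot> \<pi>(H z)\<close> is computed by
  contraassociativity.\<close>

definition act_lift ::
  "('o \<Rightarrow> 'o \<Rightarrow> ('m \<Rightarrow> 'k) \<Rightarrow> 'k) \<Rightarrow> ('o \<Rightarrow> 'o \<Rightarrow> 'o \<Rightarrow> ('m \<Rightarrow> 'k) \<Rightarrow> 'p)
    \<Rightarrow> 'o \<Rightarrow> 'o \<Rightarrow> ('m \<Rightarrow> 'k) \<Rightarrow> 'o \<Rightarrow> 'o \<Rightarrow> ('m \<Rightarrow> 'k) \<Rightarrow> 'p" where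
  "act_lift \<Phi> H =
    (\<lambda>z y \<psi>. if \<psi> \<in> C z y then (\<lambda>a b \<chi>. sP (\<Phi> z y \<psi>) (H z a b \<chi>)) else (\<lambda>a b \<chi>. 0))"

lemma act_lift_HomCHomC:
  assumes lin: "C_linear \<Phi>" and H: "\<And>z. H z \<in> HomC"
  shows "act_lift \<Phi> H \<in> HomCHomC"
  unfolding homCHomCP_def
proof (intro CollectI allI conjI ballI impI)
  fix x y \<phi> show "act_lift \<Phi> H x y \<phi> \<in> HomC"
    unfolding act_lift_def using HomC_smult[OF H, of "\<lambda>_ _. \<Phi> x y \<phi>"] by auto
next
  fix x y \<phi> \<psi> assume "\<phi> \<in> C x y" "\<psi> \<in> C x y"
  then show "act_lift \<Phi> H x y (\<lambda>g. \<phi> g + \<psi> g) =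
      (\<lambda>a b \<chi>. act_lift \<Phi> H x y \<phi> a b \<chi> + act_lift \<Phi> H x y \<psi> a b \<chi>)"
    using lin unfolding act_lift_def C_linear_def by (auto simp: C_plus P.scale_left_distrib)
next
  fix x y c \<phi> assume "\<phi> \<in> C x y"
  then show "act_lift \<Phi> H x y (\<lambda>g. c * \<phi> g) = (\<lambda>a b \<chi>. sP c (act_lift \<Phi> H x y \<phi> a b \<chi>))"
    using lin unfolding act_lift_def C_linear_def by (auto simp: C_smult)
qed (simp add: act_lift_def)

lemma pi_act_lift: "(\<And>z. H z \<in> HomC) \<Longrightarrow>
    \<pi> (act_lift \<Phi> H z y \<psi>) = (if \<psi> \<in> C z y then sP (\<Phi> z y \<psi>) (\<pi> (H z)) else 0)"
  unfolding act_lift_def using pi_scale pi_zero by auto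

definition postcomp :: "'o \<Rightarrow> 'o \<Rightarrow> 'o \<Rightarrow> 'm \<Rightarrow> ('m \<Rightarrow> 'k) \<Rightarrow> 'm \<Rightarrow> 'k" where
  "postcomp x z y h \<phi> = (\<lambda>g. if g \<in> Hom x z then \<phi> (cmp x z y h g) else 0)"

lemma postcomp_C: "\<phi> \<in> C x y \<Longrightarrow> h \<in> Hom z y \<Longrightarrow> postcomp x z y h \<phi> \<in> C x z"
  unfolding dualsp_def postcomp_def
  by (auto simp: cmp_add_right cmp_scale_right cmp_in_Hom Hom_add Hom_scale C_add C_scale)

lemma postcomp_idn: "\<phi> \<in> C x y \<Longrightarrow> postcomp x y y (idn y) \<phi> = \<phi>"
  unfolding postcomp_def by (auto simp: cmp_idn_left C_outside)

lemma postcomp_zero: "\<phi> \<in> C x y \<Longrightarrow> postcomp x z y 0 \<phi> = (\<lambda>g. 0)"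
  unfolding postcomp_def by (auto simp: cmp_zero_left C_at_zero)

lemma comult_fiber_postcomp:
  assumes F: "F \<in> HomC" and rep: "comult_rep sM Hom cmp x y \<phi> R" and h: "h \<in> Hom z y"
  shows "(\<Sum>j\<in>rep_fiber R z. sP (rep_snd R j h) (F x z (rep_fst R j))) = F x z (postcomp x z y h \<phi>)"
proof -
  have fst_C: "rep_fst R j \<in> C x z" if "j \<in> rep_fiber R z" for j
    using comult_rep_C[OF rep] that unfolding rep_fiber_def by auto
  have "(\<Sum>j\<in>rep_fiber R z. sP (rep_snd R j h) (F x z (rep_fst R j)))
      = F x z (\<lambda>g. \<Sum>j\<in>rep_fiber R z. rep_snd R j h * rep_fst R j g)"
    using fst_C by (simp add: HomC_sum_arg[OF F] HomC_scale[OF F] C_smult)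
  also have "(\<lambda>g. \<Sum>j\<in>rep_fiber R z. rep_snd R j h * rep_fst R j g) = postcomp x z y h \<phi>"
  proof
    fix g
    show "(\<Sum>j\<in>rep_fiber R z. rep_snd R j h * rep_fst R j g) = postcomp x z y h \<phi> g"
      using comult_rep_cmp[OF rep _ h, of g] fst_C C_outside[of _ x z g]
      by (cases "g \<in> Hom x z") (auto simp: postcomp_def mult.commute intro: sum.neutral)
  qed
  finally show ?thesis .
qed

lemma comult_sum_act_lift_ev:
  assumes H: "\<And>z. H z \<in> HomC" and rep: "comult_rep sM Hom cmp x y \<phi> R" and h: "h \<in> Hom z0 y0"
  shows "(\<Sum>j<length R. act_lift (ev_el z0 y0 h) H (rep_obj R j) y (rep_snd R j) x (rep_obj R j) (rep_fst R j))
    = (if y = y0 then H z0 x z0 (postcomp x z0 y0 h \<phi>) else 0)"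
proof -
  have "act_lift (ev_el z0 y0 h) H (rep_obj R j) y (rep_snd R j) x (rep_obj R j) (rep_fst R j) =
      (if rep_obj R j = z0 then (if y = y0 then sP (rep_snd R j h) (H z0 x z0 (rep_fst R j)) else 0) else 0)"
    if "j < length R" for j
    using comult_rep_C[OF rep that] by (auto simp: act_lift_def ev_el_def)
  then show ?thesis
    using comult_fiber_postcomp[OF H rep] h by (simp add: sum_rep_fiber)
qed

lemma comult_sum_act_lift_counit:
  assumes H: "\<And>z. H z \<in> HomC" and \<phi>: "\<phi> \<in> C x y" and rep: "comult_rep sM Hom cmp x y \<phi> R"
  shows "(\<Sum>j<length R. act_lift counit_el H (rep_obj R j) y (rep_snd R j) x (rep_obj R j) (rep_fst R j))
    = H y x y \<phi>"
proof -
  have "act_lift counit_el H (rep_obj R j) y (rep_snd R j) x (rep_obj R j) (rep_fst R j) =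
      (if rep_obj R j = y then sP (rep_snd R j (idn y)) (H y x y (rep_fst R j)) else 0)"
    if "j < length R" for j
    using comult_rep_C[OF rep that] by (auto simp: act_lift_def counit_el_def)
  then show ?thesis
    using comult_fiber_postcomp[OF H rep idn_in_Hom] postcomp_idn[OF \<phi>] by (simp add: sum_rep_fiber)
qed

lemma pi_diagonal:
  assumes H: "\<And>z. H z \<in> HomC"
  shows "\<pi> (\<lambda>x y \<phi>. if \<phi> \<in> C x y \<and> x = y then sP (\<phi> (idn x)) (\<pi> (H x)) else 0) = \<pi> (\<lambda>x y \<phi>. H y x y \<phi>)"
proof -
  have "(\<lambda>x y \<phi>. if \<phi> \<in> C x y \<and> x = y then sP (\<phi> (idn x)) (\<pi> (H x)) else 0) =
      (\<lambda>x y \<phi>. \<pi> (act_lift counit_el H x y \<phi>))"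
    by (intro ext) (simp add: pi_act_lift[OF H] counit_el_def pi_zero)
  moreover have "\<pi> (\<lambda>x y \<phi>. \<pi> (act_lift counit_el H x y \<phi>)) = \<pi> (\<lambda>x y \<phi>. H y x y \<phi>)"
    by (rule pi_contraassoc[OF act_lift_HomCHomC[OF C_linear_counit_el H]])
      (simp_all add: comult_sum_act_lift_counit[OF H] HomC_outside[OF H])
  ultimately show ?thesis by simp
qed

definition postcomp_map :: "'o \<Rightarrow> 'o \<Rightarrow> 'm \<Rightarrow> ('o \<Rightarrow> 'o \<Rightarrow> ('m \<Rightarrow> 'k) \<Rightarrow> 'p) \<Rightarrow> 'o \<Rightarrow> 'o \<Rightarrow> ('m \<Rightarrow> 'k) \<Rightarrow> 'p" where
  "postcomp_map z0 y0 h F = (\<lambda>x y \<phi>. if \<phi> \<in> C x y \<and> y = y0 then F x z0 (postcomp x z0 y0 h \<phi>) else 0)"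

lemma postcomp_plus: "postcomp x z y h (\<lambda>g. \<phi> g + \<psi> g) = (\<lambda>g. postcomp x z y h \<phi> g + postcomp x z y h \<psi> g)"
  unfolding postcomp_def by auto

lemma postcomp_smult: "postcomp x z y h (\<lambda>g. c * \<phi> g) = (\<lambda>g. c * postcomp x z y h \<phi> g)"
  unfolding postcomp_def by auto

lemma postcomp_map_HomC:
  assumes F: "F \<in> HomC" and h: "h \<in> Hom z0 y0"
  shows "postcomp_map z0 y0 h F \<in> HomC"
  unfolding homCP_def postcomp_map_def
  by (auto simp: postcomp_plus postcomp_smult C_plus C_smult postcomp_C[OF _ h]
      HomC_add[OF F] HomC_scale[OF F])

lemma act_ev_el_pi:
  assumes F: "F \<in> HomC" and h: "h \<in> Hom z0 y0"
  shows "act (ev_el z0 y0 h) (\<pi> F) = \<pi> (postcomp_map z0 y0 h F)"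
proof -
  have "act (ev_el z0 y0 h) (\<pi> F) = \<pi> (\<lambda>x y \<phi>. \<pi> (act_lift (ev_el z0 y0 h) (\<lambda>_. F) x y \<phi>))"
    unfolding act_eq_pi_act_map act_map_def using F by (simp add: pi_act_lift)
  also have "\<dots> = \<pi> (postcomp_map z0 y0 h F)"
    by (rule pi_contraassoc[OF act_lift_HomCHomC[OF C_linear_ev_el F]])
      (simp_all add: comult_sum_act_lift_ev[OF F _ h] postcomp_map_def)
  finally show ?thesis .
qed

subsection \<open>The module \<open>\<Theta>(P)\<close>\<close>

lemma unit_act_rho:
  assumes f: "f \<in> Hom x0 y0"
  shows "act (unit_el idn y0) (rho x0 y0 f q) = rho x0 y0 f q"
proof -
  define F where "F = act_map (ev_el x0 y0 f) q"
  have F: "F \<in> HomC"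
    unfolding F_def by (rule act_map_HomC[OF C_linear_ev_el])
  have "postcomp_map y0 y0 (idn y0) F = F"
    by (intro ext) (auto simp: postcomp_map_def postcomp_idn HomC_outside[OF F] F_def act_map_def ev_el_def)
  then show ?thesis
    using act_ev_el_pi[OF F idn_in_Hom]
    by (simp add: unit_el_eq_ev_el Theta_act_def act_eq_pi_act_map F_def)
qed

lemma rho_in_Theta: "f \<in> Hom x y \<Longrightarrow> rho x y f q \<in> Theta y"
  unfolding Theta_sp_def by (metis rangeI unit_act_rho)

lemma Theta_subspace: "P.subspace (Theta x)"
proof -
  have lin: "C_linear (unit_el idn x)"
    unfolding unit_el_eq_ev_el by (rule C_linear_ev_el)
  show ?thesis
    unfolding Theta_sp_def
  proof (rule P.subspaceI)
    show "0 \<in> range (act (unit_el idn x))"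
      using act_zero[OF lin] by (metis rangeI)
  next
    fix u v assume "u \<in> range (act (unit_el idn x))" "v \<in> range (act (unit_el idn x))"
    then obtain a b where "u = act (unit_el idn x) a" "v = act (unit_el idn x) b"
      by blast
    then show "u + v \<in> range (act (unit_el idn x))"
      using act_add[OF lin, of a b] by (simp add: image_iff) metis
  next
    fix c u assume "u \<in> range (act (unit_el idn x))"
    then obtain a where "u = act (unit_el idn x) a"
      by blast
    then show "sP c u \<in> range (act (unit_el idn x))"
      using act_scale[OF lin, of c a] by (simp add: image_iff) metis
  qed
qed

subsection \<open>The radical\<close>

text \<open>The image \<open>rad\<close> of \<open>rad_maps\<close> under \<open>\<pi>\<close> plays the role of the Jacobson radical of \<open>P\<close>.\<close>

definition rad_maps :: "('o \<Rightarrow> 'o \<Rightarrow> ('m \<Rightarrow> 'k) \<Rightarrow> 'p) set" where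
  "rad_maps = {F \<in> HomC. \<forall>a b \<chi>. a = b \<or> prec Hom b a \<longrightarrow> F a b \<chi> = 0}"

definition rad :: "'p set" where
  "rad = \<pi> ` rad_maps"

lemma rad_subspace: "P.subspace rad"
proof (rule P.subspaceI)
  have "(\<lambda>x y \<phi>. 0) \<in> rad_maps"
    unfolding rad_maps_def by simp
  then show "0 \<in> rad"
    unfolding rad_def using pi_zero by (metis image_eqI)
next
  fix u v assume "u \<in> rad" "v \<in> rad"
  then obtain F G where "F \<in> rad_maps" "G \<in> rad_maps" "u = \<pi> F" "v = \<pi> G"
    unfolding rad_def by blast
  moreover from this have "(\<lambda>x y \<phi>. F x y \<phi> + G x y \<phi>) \<in> rad_maps"
    unfolding rad_maps_def by (auto intro: HomC_plus)
  ultimately show "u + v \<in> rad"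
    unfolding rad_def using pi_add[of F G] rad_maps_def by (metis (no_types, lifting) image_eqI mem_Collect_eq)
next
  fix c u assume "u \<in> rad"
  then obtain F where "F \<in> rad_maps" "u = \<pi> F"
    unfolding rad_def by blast
  moreover from this have "(\<lambda>x y \<phi>. sP c (F x y \<phi>)) \<in> rad_maps"
    unfolding rad_maps_def using HomC_smult[of F "\<lambda>_ _. c"] by auto
  ultimately show "sP c u \<in> rad"
    unfolding rad_def using pi_scale[of F c] rad_maps_def by (metis (no_types, lifting) image_eqI mem_Collect_eq)
qed

lemma postcomp_map_rad_maps:
  assumes F: "F \<in> rad_maps" and h: "h \<in> Hom z0 y0"
  shows "postcomp_map z0 y0 h F \<in> rad_maps"
proof -
  have HomC: "F \<in> HomC" using F unfolding rad_maps_def by simp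
  have "postcomp_map z0 y0 h F a y0 \<chi> = 0" if a: "a = y0 \<or> prec Hom y0 a" and \<chi>: "\<chi> \<in> C a y0" for a \<chi>
  proof (cases "h = 0")
    case True
    then show ?thesis
      using \<chi> by (simp add: postcomp_map_def postcomp_zero HomC_at_zero[OF HomC])
  next
    case False
    then have "prec Hom z0 y0"
      using h prec_if_nonzero_Hom by blast
    with a have "prec Hom z0 a"
      using prec_trans by blast
    then show ?thesis
      using F unfolding rad_maps_def postcomp_map_def by simp
  qed
  then show ?thesis
    using postcomp_map_HomC[OF HomC h] unfolding rad_maps_def postcomp_map_def by auto
qed

lemma act_ev_el_rad: "p \<in> rad \<Longrightarrow> h \<in> Hom z0 y0 \<Longrightarrow> act (ev_el z0 y0 h) p \<in> rad"
  unfolding rad_def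
  using act_ev_el_pi postcomp_map_rad_maps rad_maps_def by fastforce

lemma rho_rad:
  assumes "x \<noteq> y" and "\<not> prec Hom y x"
  shows "rho x y f q \<in> rad"
proof -
  have "act_map (ev_el x y f) q \<in> rad_maps"
    using assms act_map_HomC[OF C_linear_ev_el] unfolding rad_maps_def
    by (auto simp: act_map_def ev_el_def)
  then show ?thesis
    unfolding rad_def Theta_act_def act_eq_pi_act_map by blast
qed

lemma rho_zero: "rho x y 0 q = 0"
proof -
  have "act_map (ev_el x y 0) q = (\<lambda>a b \<phi>. 0)"
    by (intro ext) (simp add: act_map_def ev_el_def C_at_zero)
  then show ?thesis
    by (simp add: Theta_act_def act_eq_pi_act_map pi_zero)
qed

text \<open>The counit axiom writes \<open>p\<close> as \<open>\<pi>\<close> of the diagonal family of the maps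
  \<open>c \<mapsto> e\<^sub>x(c) p\<close>, and \<open>pi_diagonal\<close> allows replacing each of them by any map with the same
  image \<open>e\<^sub>x \<cdot> p\<close> under \<open>\<pi>\<close>.\<close>

lemma rad_if_unit_acts_rad:
  assumes unit_acts: "\<And>x. act (unit_el idn x) p \<in> rad"
  shows "p \<in> rad"
proof -
  define U where "U x = act_map (unit_el idn x) p" for x
  have U: "U x \<in> HomC" for x
    unfolding U_def unit_el_eq_ev_el by (rule act_map_HomC[OF C_linear_ev_el])
  have "\<exists>G\<in>rad_maps. \<pi> G = \<pi> (U x)" for x
    using unit_acts[of x] unfolding rad_def act_eq_pi_act_map U_def by (auto simp: image_iff)
  then obtain F where F: "\<And>x. F x \<in> rad_maps" and \<pi>F: "\<And>x. \<pi> (F x) = \<pi> (U x)"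
    by metis
  have F_HomC: "F x \<in> HomC" for x
    using F unfolding rad_maps_def by simp
  have "(\<lambda>x y \<phi>. U y x y \<phi>) = (\<lambda>x y \<phi>. if \<phi> \<in> C x y \<and> x = y then sP (\<phi> (idn x)) p else 0)"
    by (intro ext) (auto simp: U_def act_map_def unit_el_def)
  then have "p = \<pi> (\<lambda>x y \<phi>. U y x y \<phi>)"
    using pi_counit[of p] by simp
  also have "\<dots> = \<pi> (\<lambda>x y \<phi>. if \<phi> \<in> C x y \<and> x = y then sP (\<phi> (idn x)) (\<pi> (U x)) else 0)"
    using pi_diagonal[of U, OF U] by simp
  also have "\<dots> = \<pi> (\<lambda>x y \<phi>. if \<phi> \<in> C x y \<and> x = y then sP (\<phi> (idn x)) (\<pi> (F x)) else 0)"
    by (simp only: \<pi>F)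
  also have "\<dots> = \<pi> (\<lambda>x y \<phi>. F y x y \<phi>)"
    by (rule pi_diagonal[of F, OF F_HomC])
  finally have "p = \<pi> (\<lambda>x y \<phi>. F y x y \<phi>)" .
  moreover have "(\<lambda>x y \<phi>. F y x y \<phi>) \<in> rad_maps"
    using F HomC_diagonal[OF F_HomC] unfolding rad_maps_def by simp
  ultimately show ?thesis
    unfolding rad_def by blast
qed

lemma rad_submodule: "submodule Hom sP Theta rho (\<lambda>x. Theta x \<inter> rad)"
  unfolding submodule_def
  using P.subspace_inter[OF Theta_subspace rad_subspace] rho_in_Theta act_ev_el_rad
  by (auto simp: Theta_act_def)

lemma rad_proper: "p \<notin> rad \<Longrightarrow> \<exists>x. Theta x \<inter> rad \<noteq> Theta x"
  using rad_if_unit_acts_rad unfolding Theta_sp_def by blast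

end

locale lf_category_contramodule = category_contramodule sM Hom cmp idn sP \<pi>
  for sM :: "'k::field \<Rightarrow> 'm::ab_group_add \<Rightarrow> 'm"
    and Hom :: "'o \<Rightarrow> 'o \<Rightarrow> 'm set"
    and cmp :: "'o \<Rightarrow> 'o \<Rightarrow> 'o \<Rightarrow> 'm \<Rightarrow> 'm \<Rightarrow> 'm"
    and idn :: "'o \<Rightarrow> 'm"
    and sP :: "'k \<Rightarrow> 'p::ab_group_add \<Rightarrow> 'p"
    and \<pi> :: "('o \<Rightarrow> 'o \<Rightarrow> ('m \<Rightarrow> 'k) \<Rightarrow> 'p) \<Rightarrow> 'p" +
  assumes locally_finite: "locally_finite sM Hom"
begin

lemma ex_hom_basis: "\<exists>B. finite B \<and> B \<subseteq> Hom x y \<and> M.independent B \<and> M.span B = Hom x y"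
proof -
  obtain B0 where B0: "finite B0" "B0 \<subseteq> Hom x y" "M.span B0 = Hom x y"
    using locally_finite unfolding locally_finite_def by blast
  obtain B where B: "B \<subseteq> B0" "M.independent B" "B0 \<subseteq> M.span B"
    by (rule M.maximal_independent_subset[of B0])
  have "M.span B \<subseteq> Hom x y"
    using M.span_mono[OF B(1)] B0(3) by simp
  moreover have "Hom x y \<subseteq> M.span B"
    using M.span_mono[OF B(3)] B0(3) by (simp add: M.span_span)
  ultimately show ?thesis
    using B B0 finite_subset[OF B(1) B0(1)] by blast
qed

definition hom_basis :: "'o \<Rightarrow> 'o \<Rightarrow> 'm set" where
  "hom_basis x y = (SOME B. finite B \<and> B \<subseteq> Hom x y \<and> M.independent B \<and> M.span B = Hom x y)"

lemma hom_basis: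
  "finite (hom_basis x y)" "hom_basis x y \<subseteq> Hom x y"
  "M.independent (hom_basis x y)" "M.span (hom_basis x y) = Hom x y"
  using someI_ex[OF ex_hom_basis[of x y]] unfolding hom_basis_def[symmetric] by auto

lemma hom_basis_in_Hom: "i \<in> hom_basis x y \<Longrightarrow> i \<in> Hom x y"
  using hom_basis(2) by blast

lemma hom_basis_trivial: "Hom x y = {0} \<Longrightarrow> hom_basis x y = {}"
  using hom_basis(2,3)[of x y] M.dependent_zero[of "hom_basis x y"] by auto

definition hom_coord :: "'o \<Rightarrow> 'o \<Rightarrow> 'm \<Rightarrow> 'm \<Rightarrow> 'k" where
  "hom_coord x y i = (\<lambda>g. if g \<in> Hom x y then M.representation (hom_basis x y) g i else 0)"

lemma hom_coord_C: "hom_coord x y i \<in> C x y"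
  unfolding dualsp_def hom_coord_def
  using M.representation_add[OF hom_basis(3)] M.representation_scale[OF hom_basis(3)] hom_basis(4)
  by (auto simp: Hom_add Hom_scale)

lemma hom_basis_expansion: "g \<in> Hom x y \<Longrightarrow> (\<Sum>i\<in>hom_basis x y. sM (hom_coord x y i g) i) = g"
  unfolding hom_coord_def
  using M.sum_representation_eq[OF hom_basis(3) _ hom_basis(1), of g] hom_basis(4) by simp

lemma C_dual_basis_expansion:
  assumes \<phi>: "\<phi> \<in> C x y"
  shows "(\<lambda>g. \<Sum>i\<in>hom_basis x y. \<phi> i * hom_coord x y i g) = \<phi>"
proof
  fix g
  show "(\<Sum>i\<in>hom_basis x y. \<phi> i * hom_coord x y i g) = \<phi> g"
  proof (cases "g \<in> Hom x y")
    case True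
    have "\<phi> g = \<phi> (\<Sum>i\<in>hom_basis x y. sM (hom_coord x y i g) i)"
      using hom_basis_expansion[OF True] by simp
    also have "\<dots> = (\<Sum>i\<in>hom_basis x y. \<phi> (sM (hom_coord x y i g) i))"
      by (simp add: C_sum_arg[OF \<phi>] Hom_scale hom_basis_in_Hom)
    also have "\<dots> = (\<Sum>i\<in>hom_basis x y. \<phi> i * hom_coord x y i g)"
      by (simp add: C_scale[OF \<phi>] hom_basis_in_Hom mult.commute)
    finally show ?thesis by simp
  next
    case False
    then show ?thesis
      using C_outside[OF \<phi> False] by (simp add: hom_coord_def)
  qed
qed

lemma HomCHomC_expand:
  assumes f: "f \<in> HomCHomC" and \<alpha>: "\<alpha> \<in> C x z" and \<beta>: "\<beta> \<in> C z y"
  shows "f z y \<beta> x z \<alpha> = (\<Sum>i\<in>hom_basis x z. f z y (\<lambda>h. \<alpha> i * \<beta> h) x z (hom_coord x z i))"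
proof -
  have "f z y \<beta> x z \<alpha> = f z y \<beta> x z (\<lambda>g. \<Sum>i\<in>hom_basis x z. \<alpha> i * hom_coord x z i g)"
    using C_dual_basis_expansion[OF \<alpha>] by simp
  also have "\<dots> = (\<Sum>i\<in>hom_basis x z. f z y \<beta> x z (\<lambda>g. \<alpha> i * hom_coord x z i g))"
    by (rule HomC_sum_arg[OF HomCHomC_HomC[OF f]]) (rule C_smult[OF hom_coord_C])
  also have "\<dots> = (\<Sum>i\<in>hom_basis x z. sP (\<alpha> i) (f z y \<beta> x z (hom_coord x z i)))"
    by (simp add: HomC_scale[OF HomCHomC_HomC[OF f] hom_coord_C])
  also have "\<dots> = (\<Sum>i\<in>hom_basis x z. f z y (\<lambda>h. \<alpha> i * \<beta> h) x z (hom_coord x z i))"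
    by (simp add: HomCHomC_scale[OF f \<beta>])
  finally show ?thesis .
qed

subsection \<open>Evaluating the comultiplication\<close>

definition precomp :: "'o \<Rightarrow> 'o \<Rightarrow> 'o \<Rightarrow> 'm \<Rightarrow> ('m \<Rightarrow> 'k) \<Rightarrow> 'm \<Rightarrow> 'k" where
  "precomp x z y i \<phi> = (\<lambda>h. if h \<in> Hom z y then \<phi> (cmp x z y h i) else 0)"

lemma precomp_C: "\<phi> \<in> C x y \<Longrightarrow> i \<in> Hom x z \<Longrightarrow> precomp x z y i \<phi> \<in> C z y"
  unfolding dualsp_def precomp_def
  by (auto simp: cmp_add_left cmp_scale_left cmp_in_Hom Hom_add Hom_scale C_add C_scale)

lemma precomp_plus: "precomp x z y i (\<lambda>g. \<phi> g + \<psi> g) = (\<lambda>h. precomp x z y i \<phi> h + precomp x z y i \<psi> h)"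
  unfolding precomp_def by auto

lemma precomp_smult: "precomp x z y i (\<lambda>g. c * \<phi> g) = (\<lambda>h. c * precomp x z y i \<phi> h)"
  unfolding precomp_def by auto

lemma comult_fiber_precomp:
  assumes rep: "comult_rep sM Hom cmp x y \<phi> R" and i: "i \<in> Hom x z"
  shows "(\<lambda>h. \<Sum>j\<in>rep_fiber R z. rep_fst R j i * rep_snd R j h) = precomp x z y i \<phi>"
proof
  fix h
  have snd_C: "rep_snd R j \<in> C z y" if "j \<in> rep_fiber R z" for j
    using comult_rep_C[OF rep] that unfolding rep_fiber_def by auto
  show "(\<Sum>j\<in>rep_fiber R z. rep_fst R j i * rep_snd R j h) = precomp x z y i \<phi> h"
    using comult_rep_cmp[OF rep i, of h] snd_C C_outside[of _ z y h]
    by (cases "h \<in> Hom z y") (auto simp: precomp_def intro: sum.neutral)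
qed

definition mid_objects :: "'o \<Rightarrow> 'o \<Rightarrow> 'o set" where
  "mid_objects x y = {z. Hom x z \<noteq> {0} \<and> Hom z y \<noteq> {0}}"

lemma finite_mid_objects: "finite (mid_objects x y)"
proof (rule finite_subset)
  show "mid_objects x y \<subseteq> {z. prec Hom x z \<and> prec Hom z y}"
    unfolding mid_objects_def using prec_if_Hom_nontrivial by auto
  show "finite {z. prec Hom x z \<and> prec Hom z y}"
    using locally_finite unfolding locally_finite_def by blast
qed

text \<open>The value of \<open>f \<circ> \<mu>\<close> at \<open>\<phi> \<in> C\<^sup>x\<^sup>,\<^sup>y\<close>, expressed through dual bases
  independently of the chosen representation of \<open>\<mu>(\<phi>)\<close>.\<close>

definition comult_eval ::
  "('o \<Rightarrow> 'o \<Rightarrow> ('m \<Rightarrow> 'k) \<Rightarrow> 'o \<Rightarrow> 'o \<Rightarrow> ('m \<Rightarrow> 'k) \<Rightarrow> 'p) \<Rightarrow> 'o \<Rightarrow> 'o \<Rightarrow> ('m \<Rightarrow> 'k) \<Rightarrow> 'p" where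
  "comult_eval f x y \<phi> =
    (\<Sum>z\<in>mid_objects x y. \<Sum>i\<in>hom_basis x z. f z y (precomp x z y i \<phi>) x z (hom_coord x z i))"

lemma comult_fiber_sum:
  assumes f: "f \<in> HomCHomC" and rep: "comult_rep sM Hom cmp x y \<phi> R"
  shows "(\<Sum>j\<in>rep_fiber R z. f z y (rep_snd R j) x z (rep_fst R j)) =
    (\<Sum>i\<in>hom_basis x z. f z y (precomp x z y i \<phi>) x z (hom_coord x z i))"
proof -
  have C: "rep_fst R j \<in> C x z" "rep_snd R j \<in> C z y" if "j \<in> rep_fiber R z" for j
    using comult_rep_C[OF rep] that unfolding rep_fiber_def by auto
  have "(\<Sum>j\<in>rep_fiber R z. f z y (rep_snd R j) x z (rep_fst R j)) =
      (\<Sum>j\<in>rep_fiber R z. \<Sum>i\<in>hom_basis x z. f z y (\<lambda>h. rep_fst R j i * rep_snd R j h) x z (hom_coord x z i))"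
    using C by (simp add: HomCHomC_expand[OF f])
  also have "\<dots> = (\<Sum>i\<in>hom_basis x z. \<Sum>j\<in>rep_fiber R z. f z y (\<lambda>h. rep_fst R j i * rep_snd R j h) x z (hom_coord x z i))"
    by (rule sum.swap)
  also have "\<dots> = (\<Sum>i\<in>hom_basis x z. f z y (\<lambda>h. \<Sum>j\<in>rep_fiber R z. rep_fst R j i * rep_snd R j h) x z (hom_coord x z i))"
    using C by (simp add: HomCHomC_sum_arg[OF f] C_smult)
  also have "\<dots> = (\<Sum>i\<in>hom_basis x z. f z y (precomp x z y i \<phi>) x z (hom_coord x z i))"
    by (intro sum.cong refl) (simp add: comult_fiber_precomp[OF rep hom_basis_in_Hom])
  finally show ?thesis .
qed

lemma comult_eval_term_outside_mid:
  assumes f: "f \<in> HomCHomC" and \<phi>: "\<phi> \<in> C x y" and z: "z \<notin> mid_objects x y"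
  shows "(\<Sum>i\<in>hom_basis x z. f z y (precomp x z y i \<phi>) x z (hom_coord x z i)) = 0"
proof (cases "Hom x z = {0}")
  case True
  then show ?thesis by (simp add: hom_basis_trivial)
next
  case False
  with z have "Hom z y = {0}"
    unfolding mid_objects_def by simp
  then have "precomp x z y i \<phi> = (\<lambda>h. 0)" if "i \<in> hom_basis x z" for i
    using that by (auto simp: precomp_def cmp_zero_left[OF hom_basis_in_Hom] C_at_zero[OF \<phi>])
  then show ?thesis
    by (simp add: HomCHomC_at_zero[OF f])
qed

lemma comult_rep_sum_eq_comult_eval:
  assumes f: "f \<in> HomCHomC" and \<phi>: "\<phi> \<in> C x y" and rep: "comult_rep sM Hom cmp x y \<phi> R"
  shows "(\<Sum>j<length R. f (rep_obj R j) y (rep_snd R j) x (rep_obj R j) (rep_fst R j)) = comult_eval f x y \<phi>"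
proof -
  define T where "T = rep_obj R ` {..<length R} \<union> mid_objects x y"
  have T: "finite T"
    unfolding T_def using finite_mid_objects by simp
  have "(\<Sum>j<length R. f (rep_obj R j) y (rep_snd R j) x (rep_obj R j) (rep_fst R j)) =
      (\<Sum>z\<in>T. \<Sum>j\<in>rep_fiber R z. f (rep_obj R j) y (rep_snd R j) x (rep_obj R j) (rep_fst R j))"
    unfolding rep_fiber_def by (rule sum.group[symmetric]) (auto simp: T_def finite_mid_objects)
  also have "\<dots> = (\<Sum>z\<in>T. \<Sum>j\<in>rep_fiber R z. f z y (rep_snd R j) x z (rep_fst R j))"
    by (auto simp: rep_fiber_def intro!: sum.cong)
  also have "\<dots> = (\<Sum>z\<in>T. \<Sum>i\<in>hom_basis x z. f z y (precomp x z y i \<phi>) x z (hom_coord x z i))"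
    by (simp add: comult_fiber_sum[OF f rep])
  also have "\<dots> = comult_eval f x y \<phi>"
    unfolding comult_eval_def
    by (rule sum.mono_neutral_right)
      (auto simp: T T_def finite_mid_objects comult_eval_term_outside_mid[OF f \<phi>])
  finally show ?thesis .
qed

lemma comult_eval_add: "f \<in> HomCHomC \<Longrightarrow> \<phi> \<in> C x y \<Longrightarrow> \<psi> \<in> C x y \<Longrightarrow>
    comult_eval f x y (\<lambda>g. \<phi> g + \<psi> g) = comult_eval f x y \<phi> + comult_eval f x y \<psi>"
  unfolding comult_eval_def precomp_plus
  by (simp add: HomCHomC_add precomp_C hom_basis_in_Hom sum.distrib)

lemma comult_eval_scale: "f \<in> HomCHomC \<Longrightarrow> \<phi> \<in> C x y \<Longrightarrow>
    comult_eval f x y (\<lambda>g. c * \<phi> g) = sP c (comult_eval f x y \<phi>)"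
  unfolding comult_eval_def precomp_smult
  by (simp add: HomCHomC_scale precomp_C hom_basis_in_Hom P.scale_sum_right)

subsection \<open>Nakayama's lemma for the radical\<close>

text \<open>Fixing the preimage of \<open>0\<close> makes \<open>rad_lift F\<close> vanish wherever \<open>F\<close> does.\<close>

definition rad_preimage :: "'p \<Rightarrow> 'o \<Rightarrow> 'o \<Rightarrow> ('m \<Rightarrow> 'k) \<Rightarrow> 'p" where
  "rad_preimage q = (if q = 0 then (\<lambda>a b \<chi>. 0) else SOME F. F \<in> rad_maps \<and> \<pi> F = q)"

lemma rad_preimage:
  assumes "rad = UNIV"
  shows "rad_preimage q \<in> rad_maps" and "\<pi> (rad_preimage q) = q"
proof -
  have "rad_preimage q \<in> rad_maps \<and> \<pi> (rad_preimage q) = q"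
  proof (cases "q = 0")
    case True
    then show ?thesis by (simp add: rad_preimage_def rad_maps_def pi_zero)
  next
    case False
    have "\<exists>F. F \<in> rad_maps \<and> \<pi> F = q"
      using assms unfolding rad_def by (metis UNIV_I imageE)
    from someI_ex[OF this] show ?thesis
      using False by (simp add: rad_preimage_def)
  qed
  then show "rad_preimage q \<in> rad_maps" and "\<pi> (rad_preimage q) = q" by auto
qed

lemma rad_preimage_HomC: "rad = UNIV \<Longrightarrow> rad_preimage q \<in> HomC"
  using rad_preimage(1) unfolding rad_maps_def by blast

definition rad_lift ::
  "('o \<Rightarrow> 'o \<Rightarrow> ('m \<Rightarrow> 'k) \<Rightarrow> 'p) \<Rightarrow> 'o \<Rightarrow> 'o \<Rightarrow> ('m \<Rightarrow> 'k) \<Rightarrow> 'o \<Rightarrow> 'o \<Rightarrow> ('m \<Rightarrow> 'k) \<Rightarrow> 'p" where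
  "rad_lift F = (\<lambda>x y \<phi>. if \<phi> \<in> C x y
     then (\<lambda>a b \<chi>. \<Sum>i\<in>hom_basis x y. sP (\<phi> i) (rad_preimage (F x y (hom_coord x y i)) a b \<chi>))
     else (\<lambda>a b \<chi>. 0))"

lemma rad_lift_HomCHomC:
  assumes rad: "rad = UNIV"
  shows "rad_lift F \<in> HomCHomC"
  unfolding homCHomCP_def
proof (intro CollectI allI conjI ballI impI)
  fix x y \<phi>
  show "rad_lift F x y \<phi> \<in> HomC"
    using HomC_sum[OF hom_basis(1) HomC_smult[OF rad_preimage_HomC[OF rad]]]
    by (simp add: rad_lift_def)
next
  fix x y \<phi> \<psi> assume "\<phi> \<in> C x y" "\<psi> \<in> C x y"
  then show "rad_lift F x y (\<lambda>g. \<phi> g + \<psi> g) = (\<lambda>a b \<chi>. rad_lift F x y \<phi> a b \<chi> + rad_lift F x y \<psi> a b \<chi>)"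
    by (auto simp: rad_lift_def C_plus P.scale_left_distrib sum.distrib)
next
  fix x y c \<phi> assume "\<phi> \<in> C x y"
  then show "rad_lift F x y (\<lambda>g. c * \<phi> g) = (\<lambda>a b \<chi>. sP c (rad_lift F x y \<phi> a b \<chi>))"
    by (auto simp: rad_lift_def C_smult P.scale_sum_right)
qed (simp add: rad_lift_def)

lemma pi_rad_lift:
  assumes rad: "rad = UNIV" and F: "F \<in> HomC"
  shows "\<pi> (rad_lift F x y \<phi>) = F x y \<phi>"
proof (cases "\<phi> \<in> C x y")
  case True
  have "\<pi> (rad_lift F x y \<phi>) = (\<Sum>i\<in>hom_basis x y. sP (\<phi> i) (F x y (hom_coord x y i)))"
    using True hom_basis(1)
    by (simp add: rad_lift_def pi_sum HomC_smult rad_preimage_HomC[OF rad] pi_scale rad_preimage(2)[OF rad])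
  also have "\<dots> = F x y (\<lambda>g. \<Sum>i\<in>hom_basis x y. \<phi> i * hom_coord x y i g)"
    by (simp add: HomC_sum_arg[OF F] HomC_scale[OF F] C_smult hom_coord_C)
  also have "\<dots> = F x y \<phi>"
    using C_dual_basis_expansion[OF True] by simp
  finally show ?thesis .
next
  case False
  then show ?thesis
    by (simp add: rad_lift_def pi_zero HomC_outside[OF F])
qed

lemma rad_lift_vanishes_on_rad:
  assumes "rad = UNIV" and "a = b \<or> prec Hom b a"
  shows "rad_lift F x y \<phi> a b \<chi> = 0"
proof -
  have "rad_preimage q a b \<chi> = 0" for q
    using rad_preimage(1)[OF assms(1), of q] assms(2) unfolding rad_maps_def by blast
  then show ?thesis
    unfolding rad_lift_def by simp
qed

lemma rad_lift_zero: "(\<And>\<psi>. F x y \<psi> = 0) \<Longrightarrow> rad_lift F x y \<phi> = (\<lambda>a b \<chi>. 0)"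
  unfolding rad_lift_def rad_preimage_def by simp

definition rad_shift :: "('o \<Rightarrow> 'o \<Rightarrow> ('m \<Rightarrow> 'k) \<Rightarrow> 'p) \<Rightarrow> 'o \<Rightarrow> 'o \<Rightarrow> ('m \<Rightarrow> 'k) \<Rightarrow> 'p" where
  "rad_shift F = (\<lambda>x y \<phi>. if \<phi> \<in> C x y then comult_eval (rad_lift F) x y \<phi> else 0)"

lemma rad_shift_HomC: "rad = UNIV \<Longrightarrow> rad_shift F \<in> HomC"
  unfolding homCP_def rad_shift_def
  by (auto simp: comult_eval_add comult_eval_scale rad_lift_HomCHomC C_plus C_smult)

definition prec_interval :: "'o \<Rightarrow> 'o \<Rightarrow> 'o set" where
  "prec_interval x y = {w. (w = x \<or> prec Hom x w) \<and> prec Hom w y}"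

lemma finite_prec_interval: "finite (prec_interval x y)"
proof (rule finite_subset)
  show "prec_interval x y \<subseteq> insert x {w. prec Hom x w \<and> prec Hom w y}"
    unfolding prec_interval_def by auto
  show "finite (insert x {w. prec Hom x w \<and> prec Hom w y})"
    using locally_finite unfolding locally_finite_def by blast
qed

lemma prec_interval_mono: "prec Hom x z \<Longrightarrow> prec_interval z y \<subseteq> prec_interval x y"
  unfolding prec_interval_def using prec_trans by blast

lemma card_prec_interval_less:
  assumes xz: "prec Hom x z" and zy: "prec Hom z y" and not_zx: "\<not> (x = z \<or> prec Hom z x)"
  shows "card (prec_interval z y) < card (prec_interval x y)"
proof (rule psubset_card_mono[OF finite_prec_interval])
  have "x \<in> prec_interval x y" and "x \<notin> prec_interval z y"
    using prec_trans[OF xz zy] not_zx unfolding prec_interval_def by auto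
  then show "prec_interval z y \<subset> prec_interval x y"
    using prec_interval_mono[OF xz] by blast
qed

definition vanishes_below :: "nat \<Rightarrow> ('o \<Rightarrow> 'o \<Rightarrow> ('m \<Rightarrow> 'k) \<Rightarrow> 'p) \<Rightarrow> bool" where
  "vanishes_below n F \<longleftrightarrow> (\<forall>x y \<phi>. card (prec_interval x y) < n \<longrightarrow> F x y \<phi> = 0)"

lemma rad_shift_vanishes_below:
  assumes rad: "rad = UNIV" and F: "vanishes_below n F"
  shows "vanishes_below (Suc n) (rad_shift F)"
  unfolding vanishes_below_def
proof (intro allI impI)
  fix x y \<phi> assume card: "card (prec_interval x y) < Suc n"
  have "rad_lift F z y (precomp x z y i \<phi>) x z (hom_coord x z i) = 0"
    if z: "z \<in> mid_objects x y" for z i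
  proof (cases "x = z \<or> prec Hom z x")
    case True
    then show ?thesis by (rule rad_lift_vanishes_on_rad[OF rad])
  next
    case False
    have "prec Hom x z" "prec Hom z y"
      using z prec_if_Hom_nontrivial unfolding mid_objects_def by auto
    with False card have "card (prec_interval z y) < n"
      using card_prec_interval_less by fastforce
    then show ?thesis
      using F rad_lift_zero unfolding vanishes_below_def by metis
  qed
  then show "rad_shift F x y \<phi> = 0"
    by (simp add: rad_shift_def comult_eval_def)
qed

definition lift_series ::
  "(nat \<Rightarrow> 'o \<Rightarrow> 'o \<Rightarrow> ('m \<Rightarrow> 'k) \<Rightarrow> 'p) \<Rightarrow> 'o \<Rightarrow> 'o \<Rightarrow> ('m \<Rightarrow> 'k) \<Rightarrow> 'o \<Rightarrow> 'o \<Rightarrow> ('m \<Rightarrow> 'k) \<Rightarrow> 'p" where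
  "lift_series F = (\<lambda>x y \<phi> a b \<chi>. \<Sum>n\<le>card (prec_interval x y). rad_lift (F n) x y \<phi> a b \<chi>)"

definition series :: "(nat \<Rightarrow> 'o \<Rightarrow> 'o \<Rightarrow> ('m \<Rightarrow> 'k) \<Rightarrow> 'p) \<Rightarrow> 'o \<Rightarrow> 'o \<Rightarrow> ('m \<Rightarrow> 'k) \<Rightarrow> 'p" where
  "series F = (\<lambda>x y \<phi>. \<Sum>n\<le>card (prec_interval x y). F n x y \<phi>)"

lemma series_HomC: "(\<And>n. F n \<in> HomC) \<Longrightarrow> series F \<in> HomC"
  unfolding series_def by (rule HomC_sum_local)

lemma series_Suc:
  assumes "\<And>n. vanishes_below n (F n)"
  shows "series F x y \<phi> = F 0 x y \<phi> + series (\<lambda>n. F (Suc n)) x y \<phi>"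
proof -
  let ?N = "card (prec_interval x y)"
  have "F (Suc ?N) x y \<phi> = 0"
    using assms[of "Suc ?N"] unfolding vanishes_below_def by simp
  then have "(\<Sum>n\<le>?N. F n x y \<phi>) = (\<Sum>n\<le>Suc ?N. F n x y \<phi>)"
    by simp
  also have "\<dots> = F 0 x y \<phi> + (\<Sum>n\<le>?N. F (Suc n) x y \<phi>)"
    by (rule sum.atMost_Suc_shift)
  finally show ?thesis
    unfolding series_def .
qed

lemma lift_series_HomCHomC:
  assumes rad: "rad = UNIV"
  shows "lift_series F \<in> HomCHomC"
  unfolding homCHomCP_def
proof (intro CollectI allI conjI ballI impI)
  fix x y \<phi>
  show "lift_series F x y \<phi> \<in> HomC"
    unfolding lift_series_def
    by (rule HomC_sum) (simp_all add: HomCHomC_HomC[OF rad_lift_HomCHomC[OF rad]])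
next
  fix x y \<phi> \<psi> assume "\<phi> \<in> C x y" "\<psi> \<in> C x y"
  then show "lift_series F x y (\<lambda>g. \<phi> g + \<psi> g) =
      (\<lambda>a b \<chi>. lift_series F x y \<phi> a b \<chi> + lift_series F x y \<psi> a b \<chi>)"
    by (simp add: lift_series_def HomCHomC_add[OF rad_lift_HomCHomC[OF rad]] sum.distrib)
next
  fix x y c \<phi> assume "\<phi> \<in> C x y"
  then show "lift_series F x y (\<lambda>g. c * \<phi> g) = (\<lambda>a b \<chi>. sP c (lift_series F x y \<phi> a b \<chi>))"
    by (simp add: lift_series_def HomCHomC_scale[OF rad_lift_HomCHomC[OF rad]] P.scale_sum_right)
qed (simp add: lift_series_def rad_lift_def)

lemma pi_lift_series:
  assumes rad: "rad = UNIV" and F: "\<And>n. F n \<in> HomC"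
  shows "\<pi> (lift_series F x y \<phi>) = series F x y \<phi>"
  unfolding lift_series_def series_def
  by (simp add: pi_sum HomCHomC_HomC[OF rad_lift_HomCHomC[OF rad]] pi_rad_lift[OF rad F])

lemma lift_series_eq_sum:
  assumes "\<And>n. vanishes_below n (F n)" and "card (prec_interval x y) \<le> M"
  shows "lift_series F x y \<phi> = (\<lambda>a b \<chi>. \<Sum>n\<le>M. rad_lift (F n) x y \<phi> a b \<chi>)"
proof (intro ext)
  fix a b \<chi>
  have "rad_lift (F n) x y \<phi> a b \<chi> = 0" if "card (prec_interval x y) < n" for n
    using assms(1)[of n] that rad_lift_zero unfolding vanishes_below_def by metis
  then show "lift_series F x y \<phi> a b \<chi> = (\<Sum>n\<le>M. rad_lift (F n) x y \<phi> a b \<chi>)"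
    unfolding lift_series_def using assms(2)
    by (intro sum.mono_neutral_left) auto
qed

lemma comult_eval_lift_series:
  assumes rad: "rad = UNIV" and F: "\<And>n. vanishes_below n (F n)" and \<phi>: "\<phi> \<in> C x y"
  shows "comult_eval (lift_series F) x y \<phi> = series (\<lambda>n. rad_shift (F n)) x y \<phi>"
proof -
  let ?M = "card (prec_interval x y)"
  have bound: "card (prec_interval z y) \<le> ?M" if "z \<in> mid_objects x y" for z
    using that prec_if_Hom_nontrivial prec_interval_mono finite_prec_interval
    unfolding mid_objects_def by (metis (mono_tags, lifting) card_mono mem_Collect_eq)
  have "comult_eval (lift_series F) x y \<phi> =
      (\<Sum>z\<in>mid_objects x y. \<Sum>i\<in>hom_basis x z. \<Sum>n\<le>?M. rad_lift (F n) z y (precomp x z y i \<phi>) x z (hom_coord x z i))"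
    unfolding comult_eval_def by (simp add: lift_series_eq_sum[OF F bound])
  also have "\<dots> = (\<Sum>n\<le>?M. comult_eval (rad_lift (F n)) x y \<phi>)"
    unfolding comult_eval_def by (simp add: sum.swap[where A = "{..?M}"])
  also have "\<dots> = series (\<lambda>n. rad_shift (F n)) x y \<phi>"
    using \<phi> by (simp add: series_def rad_shift_def)
  finally show ?thesis .
qed

lemma contramodule_nakayama:
  assumes rad: "rad = UNIV"
  shows "p = (0::'p)"
proof -
  define F where "F n = (rad_shift ^^ n) (rad_preimage p)" for n
  have F_Suc: "F (Suc n) = rad_shift (F n)" for n
    by (simp add: F_def)
  have F_HomC: "F n \<in> HomC" for n
    by (induction n) (simp_all add: F_Suc F_def rad_preimage_HomC[OF rad] rad_shift_HomC[OF rad])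
  have F_vanishes: "vanishes_below n (F n)" for n
  proof (induction n)
    case 0
    then show ?case by (simp add: vanishes_below_def)
  next
    case (Suc n)
    then show ?case by (simp add: F_Suc rad_shift_vanishes_below[OF rad])
  qed
  have "\<pi> (series F) = \<pi> (\<lambda>x y \<phi>. \<pi> (lift_series F x y \<phi>))"
    by (simp add: pi_lift_series[OF rad F_HomC])
  also have "\<dots> = \<pi> (series (\<lambda>n. F (Suc n)))"
  proof (rule pi_contraassoc[OF lift_series_HomCHomC[OF rad]])
    fix x y \<phi> R assume \<phi>: "\<phi> \<in> C x y" and rep: "comult_rep sM Hom cmp x y \<phi> R"
    show "series (\<lambda>n. F (Suc n)) x y \<phi> =
        (\<Sum>j<length R. lift_series F (rep_obj R j) y (rep_snd R j) x (rep_obj R j) (rep_fst R j))"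
      by (simp add: comult_rep_sum_eq_comult_eval[OF lift_series_HomCHomC[OF rad] \<phi> rep]
          comult_eval_lift_series[OF rad F_vanishes \<phi>] F_Suc)
  next
    fix x y \<phi> assume "\<phi> \<notin> C x y"
    then show "series (\<lambda>n. F (Suc n)) x y \<phi> = 0"
      by (simp add: series_def HomC_outside[OF F_HomC])
  qed
  finally have shifted: "\<pi> (series F) = \<pi> (series (\<lambda>n. F (Suc n)))" .
  have "series F = (\<lambda>x y \<phi>. F 0 x y \<phi> + series (\<lambda>n. F (Suc n)) x y \<phi>)"
    by (intro ext) (rule series_Suc[OF F_vanishes])
  then have "\<pi> (series F) = \<pi> (F 0) + \<pi> (series (\<lambda>n. F (Suc n)))"
    using pi_add[OF F_HomC series_HomC[OF F_HomC]] by simp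
  with shifted have "\<pi> (F 0) = 0"
    by simp
  then show "p = 0"
    by (simp add: F_def rad_preimage(2)[OF rad])
qed

lemma rad_big_submodule: "big_submodule Hom sP Theta rho (\<lambda>x. Theta x \<inter> rad)"
  unfolding big_submodule_def
proof (intro conjI allI rad_submodule)
  fix y
  define A where "A = insert y {x. prec Hom y x \<and> prec Hom x y}"
  have "finite A"
    using locally_finite unfolding locally_finite_def A_def by simp
  moreover have "rho x y f q \<in> Theta y \<inter> rad" if x: "x \<notin> A" and f: "f \<in> Hom x y" for x f q
  proof (cases "f = 0")
    case True
    then show ?thesis
      using P.subspace_0[OF P.subspace_inter[OF Theta_subspace rad_subspace]] by (simp add: rho_zero)
  next
    case False
    then have "prec Hom x y"
      using f prec_if_nonzero_Hom by blast
    with x have "x \<noteq> y" "\<not> prec Hom y x"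
      unfolding A_def by auto
    then show ?thesis
      by (simp add: rho_in_Theta[OF f] rho_rad)
  qed
  ultimately show "\<exists>A. finite A \<and> (\<forall>x. x \<notin> A \<longrightarrow> (\<forall>f\<in>Hom x y. \<forall>p\<in>Theta x. rho x y f p \<in> Theta y \<inter> rad))"
    by blast
qed

end

theorem lemma4p11:
  fixes sM :: "'k::field \<Rightarrow> 'm::ab_group_add \<Rightarrow> 'm"
    and Hom :: "'o \<Rightarrow> 'o \<Rightarrow> 'm set"
    and cmp :: "'o \<Rightarrow> 'o \<Rightarrow> 'o \<Rightarrow> 'm \<Rightarrow> 'm \<Rightarrow> 'm"
    and idn :: "'o \<Rightarrow> 'm"
    and sP :: "'k \<Rightarrow> 'p::ab_group_add \<Rightarrow> 'p"
    and \<pi> :: "('o \<Rightarrow> 'o \<Rightarrow> ('m \<Rightarrow> 'k) \<Rightarrow> 'p) \<Rightarrow> 'p"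
  assumes "klinear_category sM Hom cmp idn"
    and "locally_finite sM Hom"
    and "contramodule sM Hom cmp idn sP \<pi>"
    and "\<exists>p::'p. p \<noteq> 0"
  shows "\<exists>Q. big_submodule Hom sP (Theta_sp sM Hom idn sP \<pi>) (Theta_act sM Hom sP \<pi>) Q \<and>
             (\<exists>x. Q x \<noteq> Theta_sp sM Hom idn sP \<pi> x)"
proof -
  interpret lf_category_contramodule sM Hom cmp idn sP \<pi>
    using assms(1-3) by unfold_locales
  have "rad \<noteq> UNIV"
    using contramodule_nakayama assms(4) by blast
  then obtain p where "p \<notin> rad"
    by blast
  then obtain x where "Theta x \<inter> rad \<noteq> Theta x"
    using rad_proper by blast
  then show ?thesis
    using rad_big_submodule by blast
qed

end
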